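(* Let $\mathbf v\in\omega^{<\omega}$ and let $O\subsetneq\mathbf S_{\mathbf v}$ be open in the Baire space and $\pi$-dense at $\mathbf v$. Then there is a foliage tree $\mathbf G$ such that: (a1) $0_{\mathbf G}=\mathbf v$; (a2) $\mathrm{height}\,\mathbf G\le\omega$; (a3) $\mathbf G$ is $\aleph_0$-branching; (a4) $\mathbf G$ has bounded chains; (a5) $\mathbf G$ is locally strict; (a6) $\mathbf G$ is open in the Baire space; (a7) $\mathbf G$ is a foliage graft for $\mathbf S$; (a8) $\mathbf G$ preserves shoots of $\mathbf S$; (a9) $\mathrm{impl}\,\mathbf G\ne\emptyset$; (a10) $\mathrm{cut}(\mathbf S,\mathbf G)=\mathbf S_{\mathbf v}\setminus O$; (a11) $O$ is the union of the pairwise disjoint family $(\mathbf S_z)_{z\in\max\mathbf G}$.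
   Context: Trees: a tree is a pair $(Q,<)$ with $<$ irreflexive transitive and predecessor sets well-ordered; $\mathrm{sons}(x)$ = immediate successors; $\max$ = maximal nodes; $0$ = least node; bounded chains: every nonempty chain has an upper-bound node; $\aleph_0$-branching: every non-maximal node has exactly $\aleph_0$ sons; height of a tree = least ordinal $\beta$ such that no node has predecessor set of order type $\beta$; $A{\downarrow}=\{v:\exists a\in A\ a\le v\}$. A graft for a tree $\mathcal T$ is a tree $\mathcal G$ with more than one node, least node $0_{\mathcal G}\in\mathrm{nodes}\,\mathcal T$, $\max\mathcal G\subseteq\{v\in\mathrm{nodes}\,\mathcal T:v>_{\mathcal T}0_{\mathcal G}\}$ an antichain in $\mathcal T$, and $\mathrm{impl}\,\mathcal G:=\mathrm{nodes}\,\mathcal G\setminus(\{0_{\mathcal G}\}\cup\max\mathcal G)$ disjoint from $\mathrm{nodes}\,\mathcal T$; $\mathrm{expl}(\mathcal T,\mathcal G)=\{v:v>_{\mathcal T}0_{\mathcal G}\}\setminus(\max\mathcal G){\downarrow}_{\mathcal T}$. Foliage trees: $\mathbf F=(\mathcal T,l)$, leaves $\mathbf F_x=l(x)$; tree notions refer to the skeleton $\mathcal T$; nonincreasing: $x\le y\Rightarrow\mathbf F_y\subseteq\mathbf F_x$; locally strict: each non-maximal $\mathbf F_x$ is the union of the pairwise disjoint family $(\mathbf F_s)_{s\in\mathrm{sons}(x)}$; open in a space: all leaves open; $\mathrm{flesh}\,\mathbf F=\bigcup_x\mathbf F_x$; $\mathrm{shoot}_{\mathbf F}(z)=\{\bigcup_{s\in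 C}\mathbf F_s:C$ cofinite subset of $\mathrm{sons}(z)\}$; $\mathrm{scope}_{\mathbf F}(p)=\{y:p\in\mathbf F_y\}$; $\gamma\gg\delta$ means every nonempty $D\in\delta$ contains some nonempty $G\in\gamma$. The standard foliage tree $\mathbf S$ has skeleton $(\omega^{<\omega},\subsetneq)$ and leaves $\mathbf S_x=\{p\in\omega^\omega:x\subseteq p\}$; the Baire space is $\omega^\omega$ with the product topology ($\omega$ discrete). $A\subseteq\omega^\omega$ is $\pi$-dense at $x\in\omega^{<\omega}$ iff for every $y\in\omega^{<\omega}$ with $y\supseteq x$ the set $\{n\in\omega:\mathbf S_{y^\frown\langle n\rangle}\subseteq A\}$ is infinite. A foliage graft for a nonincreasing foliage tree $\mathbf F$ is a nonincreasing foliage tree $\mathbf G$ whose skeleton is a graft for the skeleton of $\mathbf F$, with $\mathbf G_{0_{\mathbf G}}\subseteq\mathbf F_{0_{\mathbf G}}$ and $\mathbf G_m=\mathbf F_m$ for all $m\in\max\mathbf G$; $\mathrm{cut}(\mathbf F,\mathbf G)=\mathbf F_{0_{\mathbf G}}\setminus\mathbf G_{0_{\mathbf G}}$. $\mathbf G$ preserves shoots of $\mathbf F$ iff for each $p\in\mathrm{flesh}\,\mathbf G$ and each $y\in\mathrm{scope}_{\mathbf F}(p)\cap(\{0_{\mathbf G}\}\cup\mathrm{expl}(\mathbf F,\mathbf G))$ there is $x\in\mathrm{scope}_{\mathbf G}(p)\cap(\{0_{\mathbf G}\}\cup\mathrm{impl}\,\mathbf G)$ with $\mathrm{shoot}_{\mathbf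 G}(x)\gg\mathrm{shoot}_{\mathbf F}(y)$ (implant and explant refer to skeletons). *)

theory Defs
  imports "HOL-Analysis.Analysis" "HOL-Library.Sublist"
begin

type_synonym 'a tree = "'a set \<times> ('a \<Rightarrow> 'a \<Rightarrow> bool)"

definition nodes :: "'a tree \<Rightarrow> 'a set" where "nodes T = fst T"
definition lt :: "'a tree \<Rightarrow> 'a \<Rightarrow> 'a \<Rightarrow> bool" where "lt T = snd T"
definition le :: "'a tree \<Rightarrow> 'a \<Rightarrow> 'a \<Rightarrow> bool" where "le T x y \<longleftrightarrow> x = y \<or> lt T x y"

definition preds :: "'a tree \<Rightarrow> 'a \<Rightarrow> 'a set" where
  "preds T x = {y \<in> nodes T. lt T y x}"

definition is_tree :: "'a tree \<Rightarrow> bool" where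
  "is_tree T \<longleftrightarrow>
     (\<forall>x y. lt T x y \<longrightarrow> x \<in> nodes T \<and> y \<in> nodes T) \<and>
     (\<forall>x \<in> nodes T. \<not> lt T x x) \<and>
     (\<forall>x \<in> nodes T. \<forall>y \<in> nodes T. \<forall>z \<in> nodes T. lt T x y \<longrightarrow> lt T y z \<longrightarrow> lt T x z) \<and>
     (\<forall>x \<in> nodes T.
        (\<forall>a \<in> preds T x. \<forall>b \<in> preds T x. a \<noteq> b \<longrightarrow> lt T a b \<or> lt T b a) \<and>
        (\<forall>B. B \<subseteq> preds T x \<longrightarrow> B \<noteq> {} \<longrightarrow> (\<exists>m \<in> B. \<forall>b \<in> B. \<not> lt T b m)))"

definition sons :: "'a tree \<Rightarrow> 'a \<Rightarrow> 'a set" where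
  "sons T x = {y \<in> nodes T. lt T x y \<and> \<not> (\<exists>z \<in> nodes T. lt T x z \<and> lt T z y)}"

definition maxnodes :: "'a tree \<Rightarrow> 'a set" where
  "maxnodes T = {x \<in> nodes T. \<not> (\<exists>y \<in> nodes T. lt T x y)}"

definition is_least :: "'a tree \<Rightarrow> 'a \<Rightarrow> bool" where
  "is_least T r \<longleftrightarrow> r \<in> nodes T \<and> (\<forall>x \<in> nodes T. le T r x)"

definition root :: "'a tree \<Rightarrow> 'a" where
  "root T = (THE r. is_least T r)"

definition is_chain :: "'a tree \<Rightarrow> 'a set \<Rightarrow> bool" where
  "is_chain T C \<longleftrightarrow> C \<subseteq> nodes T \<and> (\<forall>a \<in> C. \<forall>b \<in> C. a \<noteq> b \<longrightarrow> lt T a b \<or> lt T b a)"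

definition bounded_chains :: "'a tree \<Rightarrow> bool" where
  "bounded_chains T \<longleftrightarrow>
     (\<forall>C. is_chain T C \<longrightarrow> C \<noteq> {} \<longrightarrow> (\<exists>u \<in> nodes T. \<forall>c \<in> C. le T c u))"

definition aleph0_branching :: "'a tree \<Rightarrow> bool" where
  "aleph0_branching T \<longleftrightarrow>
     (\<forall>x \<in> nodes T - maxnodes T. countable (sons T x) \<and> infinite (sons T x))"

text \<open>height T \<le> omega: no node has a predecessor set of order type omega (or
  larger), i.e. every predecessor set is finite.\<close>
definition height_le_omega :: "'a tree \<Rightarrow> bool" where
  "height_le_omega T \<longleftrightarrow> (\<forall>x \<in> nodes T. finite (preds T x))"

definition antichain :: "'a tree \<Rightarrow> 'a set \<Rightarrow> bool" where
  "antichain T A \<longleftrightarrow> (\<forall>a \<in> A. \<forall>b \<in> A. \<not> lt T a b)"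

definition upclose :: "'a tree \<Rightarrow> 'a set \<Rightarrow> 'a set" where
  "upclose T A = {v \<in> nodes T. \<exists>a \<in> A. le T a v}"

definition impl :: "'a tree \<Rightarrow> 'a set" where
  "impl G = nodes G - ({root G} \<union> maxnodes G)"

definition is_graft :: "'a tree \<Rightarrow> 'a tree \<Rightarrow> bool" where
  "is_graft T G \<longleftrightarrow>
     is_tree G \<and> (\<exists>a \<in> nodes G. \<exists>b \<in> nodes G. a \<noteq> b) \<and>
     (\<exists>r. is_least G r) \<and> root G \<in> nodes T \<and>
     maxnodes G \<subseteq> {v \<in> nodes T. lt T (root G) v} \<and>
     antichain T (maxnodes G) \<and>
     impl G \<inter> nodes T = {}"

definition expl :: "'a tree \<Rightarrow> 'a tree \<Rightarrow> 'a set" where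
  "expl T G = {v \<in> nodes T. lt T (root G) v} - upclose T (maxnodes G)"

type_synonym ('a, 'p) ftree = "'a tree \<times> ('a \<Rightarrow> 'p set)"

definition skel :: "('a, 'p) ftree \<Rightarrow> 'a tree" where "skel F = fst F"
definition leaf :: "('a, 'p) ftree \<Rightarrow> 'a \<Rightarrow> 'p set" where "leaf F = snd F"

definition is_ftree :: "('a, 'p) ftree \<Rightarrow> bool" where
  "is_ftree F \<longleftrightarrow> is_tree (skel F)"

definition nonincreasing :: "('a, 'p) ftree \<Rightarrow> bool" where
  "nonincreasing F \<longleftrightarrow>
     (\<forall>x \<in> nodes (skel F). \<forall>y \<in> nodes (skel F). le (skel F) x y \<longrightarrow> leaf F y \<subseteq> leaf F x)"

definition locally_strict :: "('a, 'p) ftree \<Rightarrow> bool" where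
  "locally_strict F \<longleftrightarrow>
     (\<forall>x \<in> nodes (skel F) - maxnodes (skel F).
        leaf F x = (\<Union>s \<in> sons (skel F) x. leaf F s) \<and>
        disjoint_family_on (leaf F) (sons (skel F) x))"

definition open_ftree :: "('a, 'p::topological_space) ftree \<Rightarrow> bool" where
  "open_ftree F \<longleftrightarrow> (\<forall>x \<in> nodes (skel F). open (leaf F x))"

definition flesh :: "('a, 'p) ftree \<Rightarrow> 'p set" where
  "flesh F = (\<Union>x \<in> nodes (skel F). leaf F x)"

definition shoot :: "('a, 'p) ftree \<Rightarrow> 'a \<Rightarrow> 'p set set" where
  "shoot F z = {(\<Union>s \<in> C. leaf F s) | C. C \<subseteq> sons (skel F) z \<and> finite (sons (skel F) z - C)}"

definition scope :: "('a, 'p) ftree \<Rightarrow> 'p \<Rightarrow> 'a set" where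
  "scope F p = {y \<in> nodes (skel F). p \<in> leaf F y}"

definition gg :: "'p set set \<Rightarrow> 'p set set \<Rightarrow> bool" where
  "gg \<gamma> \<delta> \<longleftrightarrow> (\<forall>D \<in> \<delta>. D \<noteq> {} \<longrightarrow> (\<exists>G \<in> \<gamma>. G \<noteq> {} \<and> G \<subseteq> D))"

definition foliage_graft :: "('a, 'p) ftree \<Rightarrow> ('a, 'p) ftree \<Rightarrow> bool" where
  "foliage_graft F G \<longleftrightarrow>
     is_ftree G \<and> nonincreasing G \<and> is_graft (skel F) (skel G) \<and>
     leaf G (root (skel G)) \<subseteq> leaf F (root (skel G)) \<and>
     (\<forall>m \<in> maxnodes (skel G). leaf G m = leaf F m)"

definition cut :: "('a, 'p) ftree \<Rightarrow> ('a, 'p) ftree \<Rightarrow> 'p set" where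
  "cut F G = leaf F (root (skel G)) - leaf G (root (skel G))"

definition preserves_shoots :: "('a, 'p) ftree \<Rightarrow> ('a, 'p) ftree \<Rightarrow> bool" where
  "preserves_shoots F G \<longleftrightarrow>
     (\<forall>p \<in> flesh G. \<forall>y \<in> scope F p \<inter> ({root (skel G)} \<union> expl (skel F) (skel G)).
        \<exists>x \<in> scope G p \<inter> ({root (skel G)} \<union> impl (skel G)).
          gg (shoot G x) (shoot F y))"

text \<open>The standard foliage tree S. Nodes of the ambient node type
  nat list + nat: the nodes of S are the Inl x (x in omega^{<omega}); the
  right summand supplies fresh nodes for implants of grafts.\<close>
type_synonym node = "nat list + nat"

definition S_lt :: "node \<Rightarrow> node \<Rightarrow> bool" where
  "S_lt a b = (case (a, b) of (Inl x, Inl y) \<Rightarrow> strict_prefix x y | _ \<Rightarrow> False)"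

definition cyl :: "nat list \<Rightarrow> (nat \<Rightarrow> nat) set" where
  "cyl x = {p. \<forall>i < length x. p i = x ! i}"

definition S_leaf :: "node \<Rightarrow> (nat \<Rightarrow> nat) set" where
  "S_leaf a = (case a of Inl x \<Rightarrow> cyl x | Inr _ \<Rightarrow> {})"

definition S :: "(node, nat \<Rightarrow> nat) ftree" where
  "S = ((range Inl, S_lt), S_leaf)"

definition pi_dense_at :: "(nat \<Rightarrow> nat) set \<Rightarrow> nat list \<Rightarrow> bool" where
  "pi_dense_at A x \<longleftrightarrow> (\<forall>y. prefix x y \<longrightarrow> infinite {n. cyl (y @ [n]) \<subseteq> A})"

end

theory Submission
  imports Defs
begin

text \<open>
  The maximal nodes of the graft are the words whose cylinder is a maximal cylinder inside
  \<open>U\<close> above \<open>v\<close>; as \<open>U\<close> is open, these cylinders partition \<open>U\<close>. The implant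
  consists of copies, one for each colour \<open>k \<ge> 1\<close>, of the part of \<open>S\<close> above \<open>v\<close>
  whose cylinders are not inside \<open>U\<close>; each maximal word is attached to the copy of its
  colour. By \<open>\<pi>\<close>-density the colouring can be chosen so that every colour occurs
  infinitely often among the maximal sons of every such word, which makes the copies
  \<open>\<aleph>\<^sub>0\<close>-branching. Every son of the copy of \<open>w\<close> lies in the cylinder of a
  different son of \<open>w\<close>, and infinitely many of them are maximal, so every shoot of \<open>w\<close>
  contains a nonempty shoot of its copy. Finally the leaf of a node is the union of the
  cylinders of the maximal nodes above it, and local strictness holds for any tree whose
  leaves arise this way from pairwise disjoint leaves of the maximal nodes.
\<close>

section \<open>The Baire space and the standard foliage tree\<close>

lemma strict_prefix_snoc_iff: "strict_prefix u (w @ [n]) \<longleftrightarrow> prefix u w"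
  by (auto simp: strict_prefix_def)

lemma mem_cyl_iff: "p \<in> cyl x \<longleftrightarrow> map p [0..<length x] = x"
  by (auto simp: cyl_def intro: nth_equalityI) (metis add_0 diff_zero nth_map_upt)

lemma cyl_antimono: "prefix x y \<Longrightarrow> cyl y \<subseteq> cyl x"
  unfolding cyl_def by (auto simp: prefix_def nth_append)

lemma cyl_nonempty: "cyl x \<noteq> {}"
proof -
  have "(\<lambda>i. if i < length x then x ! i else 0) \<in> cyl x" unfolding cyl_def by auto
  then show ?thesis by auto
qed

lemma prefix_map_upt: "i \<le> j \<Longrightarrow> prefix (map p [0..<i]) (map p [0..<j])"
  by (metis le_add_diff_inverse map_append prefixI upt_add_eq_append zero_le)

lemma cyl_prefix_cases: "p \<in> cyl x \<Longrightarrow> p \<in> cyl y \<Longrightarrow> prefix x y \<or> prefix y x"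
  unfolding mem_cyl_iff by (metis nat_le_linear prefix_map_upt)

lemma open_cyl: "open (cyl x)"
proof -
  have "cyl x = {f. \<forall>i\<in>{..<length x}. f (id i) \<in> {x ! i}}" unfolding cyl_def by auto
  moreover have "open {f::nat\<Rightarrow>nat. \<forall>i\<in>{..<length x}. f (id i) \<in> {x ! i}}"
    by (rule product_topology_basis') (auto simp: open_discrete)
  ultimately show ?thesis by simp
qed

lemma open_imp_cyl_subset:
  assumes "open U" "p \<in> U"
  obtains j where "cyl (map p [0..<j]) \<subseteq> U"
proof -
  have "openin (product_topology (\<lambda>i. euclidean) UNIV) U"
    using assms unfolding open_fun_def by simp
  from product_topology_open_contains_basis[OF this assms(2)]
  obtain X where X: "p \<in> (\<Pi>\<^sub>E i\<in>UNIV. X i)" "finite {i. X i \<noteq> UNIV}" "(\<Pi>\<^sub>E i\<in>UNIV. X i) \<subseteq> U"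
    by auto
  obtain j where j: "{i. X i \<noteq> UNIV} \<subseteq> {..<j}"
    using finite_nat_bounded[OF X(2)] by blast
  have "q \<in> (\<Pi>\<^sub>E i\<in>UNIV. X i)" if "q \<in> cyl (map p [0..<j])" for q
  proof -
    have "q i \<in> X i" for i
      using that X(1) j by (cases "i < j") (auto simp: cyl_def)
    then show ?thesis by auto
  qed
  with X(3) show ?thesis using that by blast
qed

lemma open_imp_cyl_subset_eventually:
  assumes "open U" "p \<in> U"
  obtains j where "\<And>i. j \<le> i \<Longrightarrow> cyl (map p [0..<i]) \<subseteq> U"
  using open_imp_cyl_subset[OF assms] cyl_antimono prefix_map_upt by (meson order_trans)

lemma S_simps [simp]: "nodes (skel S) = range Inl" "lt (skel S) = S_lt" "leaf S = S_leaf"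
  by (simp_all add: S_def skel_def leaf_def nodes_def lt_def)

lemma S_lt_simps [simp]: "S_lt (Inl a) (Inl b) = strict_prefix a b" "S_lt (Inr j) x = False" "S_lt x (Inr j) = False"
  by (auto simp: S_lt_def split: sum.splits)

lemma S_leaf_Inl [simp]: "S_leaf (Inl a) = cyl a"
  by (simp add: S_leaf_def)

lemma sons_S: "Inl (w @ [n]) \<in> sons (skel S) (Inl w)"
  unfolding sons_def by (auto simp: strict_prefix_def strict_prefix_snoc_iff)

lemma shoot_S_cofinite_sons:
  assumes "D \<in> shoot S (Inl w)"
  obtains F where "finite F" "\<And>n. n \<notin> F \<Longrightarrow> cyl (w @ [n]) \<subseteq> D"
proof -
  obtain C where D: "D = (\<Union>s \<in> C. S_leaf s)" and finC: "finite (sons (skel S) (Inl w) - C)"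
    using assms unfolding shoot_def by auto
  define F where "F = {n. Inl (w @ [n]) \<notin> C}"
  have "(\<lambda>n. Inl (w @ [n]) :: node) ` F \<subseteq> sons (skel S) (Inl w) - C"
    using sons_S unfolding F_def by auto
  then have "finite ((\<lambda>n. Inl (w @ [n]) :: node) ` F)" using finC finite_subset by blast
  then have "finite F" by (rule finite_imageD) (simp add: inj_on_def)
  moreover have "cyl (w @ [n]) \<subseteq> D" if "n \<notin> F" for n
    using that unfolding D F_def by force
  ultimately show ?thesis by (rule that)
qed

section \<open>Trees\<close>

lemma
  assumes "is_tree T"
  shows tree_lt_nodes: "lt T x y \<Longrightarrow> x \<in> nodes T \<and> y \<in> nodes T"
    and tree_lt_irrefl: "\<not> lt T x x"
    and tree_lt_trans: "lt T x y \<Longrightarrow> lt T y z \<Longrightarrow> lt T x z"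
    and tree_preds_linear: "a \<in> preds T x \<Longrightarrow> b \<in> preds T x \<Longrightarrow> a \<noteq> b \<Longrightarrow> lt T a b \<or> lt T b a"
    and tree_preds_minimal: "B \<subseteq> preds T x \<Longrightarrow> B \<noteq> {} \<Longrightarrow> \<exists>m \<in> B. \<forall>b \<in> B. \<not> lt T b m"
proof -
  note tree = assms[unfolded is_tree_def]
  have nodes: "\<forall>x y. lt T x y \<longrightarrow> x \<in> nodes T \<and> y \<in> nodes T"
    using tree by (elim conjE) assumption
  have irrefl: "\<forall>x \<in> nodes T. \<not> lt T x x"
    using tree by (elim conjE) assumption
  have trans: "\<forall>x \<in> nodes T. \<forall>y \<in> nodes T. \<forall>z \<in> nodes T. lt T x y \<longrightarrow> lt T y z \<longrightarrow> lt T x z"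
    using tree by (elim conjE) assumption
  have preds: "\<forall>x \<in> nodes T.
        (\<forall>a \<in> preds T x. \<forall>b \<in> preds T x. a \<noteq> b \<longrightarrow> lt T a b \<or> lt T b a) \<and>
        (\<forall>B. B \<subseteq> preds T x \<longrightarrow> B \<noteq> {} \<longrightarrow> (\<exists>m \<in> B. \<forall>b \<in> B. \<not> lt T b m))"
    using tree by (elim conjE) assumption
  show "lt T x y \<Longrightarrow> x \<in> nodes T \<and> y \<in> nodes T" using nodes by blast
  show "\<not> lt T x x" using nodes irrefl by blast
  show "lt T x y \<Longrightarrow> lt T y z \<Longrightarrow> lt T x z" using nodes trans by blast
  have "a \<in> preds T x \<Longrightarrow> x \<in> nodes T" for a
    using nodes unfolding preds_def by blast
  then show "a \<in> preds T x \<Longrightarrow> b \<in> preds T x \<Longrightarrow> a \<noteq> b \<Longrightarrow> lt T a b \<or> lt T b a"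
    using preds by blast
  show "\<exists>m \<in> B. \<forall>b \<in> B. \<not> lt T b m" if "B \<subseteq> preds T x" "B \<noteq> {}"
  proof -
    from that obtain a where "a \<in> preds T x" by blast
    then have "x \<in> nodes T" using \<open>\<And>a. a \<in> preds T x \<Longrightarrow> x \<in> nodes T\<close> by blast
    then show ?thesis using preds that by simp
  qed
qed

lemma tree_le_trans: "is_tree T \<Longrightarrow> le T x y \<Longrightarrow> le T y z \<Longrightarrow> le T x z"
  unfolding le_def by (metis tree_lt_trans)

lemma root_eqI:
  assumes "is_tree T" "is_least T r"
  shows "root T = r"
  unfolding root_def
proof (rule the_equality)
  fix r' assume "is_least T r'"
  with assms show "r' = r"
    unfolding is_least_def le_def by (metis tree_lt_irrefl tree_lt_trans)
qed fact

lemma sons_not_lt: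
  assumes "s \<in> sons T x" "s' \<in> sons T x"
  shows "\<not> lt T s s'"
  using assms unfolding sons_def by blast

lemma exists_son_below:
  assumes T: "is_tree T" and "lt T x y"
  shows "\<exists>s \<in> sons T x. le T s y"
proof (cases "{z \<in> preds T y. lt T x z} = {}")
  case True
  then have "y \<in> sons T x"
    using assms tree_lt_nodes unfolding sons_def preds_def by fastforce
  then show ?thesis unfolding le_def by blast
next
  case False
  obtain s where s: "s \<in> preds T y" "lt T x s" and min: "\<forall>z \<in> preds T y. lt T x z \<longrightarrow> \<not> lt T z s"
    using tree_preds_minimal[OF T, of "{z \<in> preds T y. lt T x z}" y] False by auto
  have "\<not> (lt T x z \<and> lt T z s)" if "z \<in> nodes T" for z
    using min s(1) tree_lt_trans[OF T, of z s y] that unfolding preds_def by blast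
  then have "s \<in> sons T x"
    using s unfolding sons_def preds_def by blast
  with s show ?thesis unfolding preds_def le_def by blast
qed

lemma sons_common_upper_bound:
  assumes T: "is_tree T" and s: "s \<in> sons T x" "s' \<in> sons T x"
    and "le T s z" "le T s' z"
  shows "s = s'"
proof (rule ccontr)
  assume "s \<noteq> s'"
  moreover have "\<not> lt T s s'" "\<not> lt T s' s" using sons_not_lt[OF s] sons_not_lt[OF s(2,1)] by auto
  ultimately have "lt T s z" "lt T s' z" using assms(4,5) unfolding le_def by auto
  then have "s \<in> preds T z" "s' \<in> preds T z" "z \<in> nodes T"
    using tree_lt_nodes[OF T] unfolding preds_def by auto
  then show False
    using \<open>s \<noteq> s'\<close> \<open>\<not> lt T s s'\<close> \<open>\<not> lt T s' s\<close> tree_preds_linear[OF T] by blast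
qed

lemma chain_has_top_if_rank_bounded:
  assumes chain: "is_chain T C" and "C \<noteq> {}"
    and rank: "\<And>a b. lt T a b \<Longrightarrow> f a < (f b :: nat)"
    and bound: "\<And>c. c \<in> C \<Longrightarrow> f c \<le> B"
  shows "\<exists>u \<in> C. \<forall>c \<in> C. le T c u"
proof -
  have "f ` C \<subseteq> {..B}" using bound by auto
  then have "finite (f ` C)" using finite_subset by blast
  moreover have "f ` C \<noteq> {}" using \<open>C \<noteq> {}\<close> by blast
  ultimately have "Max (f ` C) \<in> f ` C" by (rule Max_in)
  then obtain u where u: "u \<in> C" "f u = Max (f ` C)" by auto
  have "le T c u" if "c \<in> C" for c
  proof (cases "c = u")
    case False
    have "f c \<le> f u" using u(2) \<open>finite (f ` C)\<close> that by simp
    then have "\<not> lt T u c" using rank by (meson leD)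
    then show ?thesis using chain that u(1) False unfolding is_chain_def le_def by blast
  qed (simp add: le_def)
  with u(1) show ?thesis by blast
qed

context
  fixes F :: "('a, 'p) ftree"
  assumes tree: "is_tree (skel F)"
    and leaf_eq: "\<And>x. x \<in> nodes (skel F) \<Longrightarrow>
      leaf F x = (\<Union>m \<in> {m \<in> maxnodes (skel F). le (skel F) x m}. leaf F m)"
begin

lemma nonincreasing_if_leaves_from_maxnodes: "nonincreasing F"
  unfolding nonincreasing_def
proof (intro ballI impI)
  fix x y assume "x \<in> nodes (skel F)" "y \<in> nodes (skel F)" "le (skel F) x y"
  then have "{m \<in> maxnodes (skel F). le (skel F) y m} \<subseteq> {m \<in> maxnodes (skel F). le (skel F) x m}"
    using tree_le_trans[OF tree] by blast
  then show "leaf F y \<subseteq> leaf F x"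
    using leaf_eq \<open>x \<in> nodes (skel F)\<close> \<open>y \<in> nodes (skel F)\<close> by (metis (no_types, lifting) UN_mono order_refl)
qed

lemma locally_strict_if_leaves_from_maxnodes:
  assumes disj: "disjoint_family_on (leaf F) (maxnodes (skel F))"
  shows "locally_strict F"
  unfolding locally_strict_def
proof (intro ballI conjI)
  let ?T = "skel F"
  fix x assume x: "x \<in> nodes ?T - maxnodes ?T"
  have son_node: "s \<in> nodes ?T" if "s \<in> sons ?T x" for s
    using that unfolding sons_def by blast
  have son_gt: "lt ?T x s" if "s \<in> sons ?T x" for s
    using that unfolding sons_def by blast
  show "leaf F x = (\<Union>s \<in> sons ?T x. leaf F s)"
  proof
    show "leaf F x \<subseteq> (\<Union>s \<in> sons ?T x. leaf F s)"
    proof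
      fix p assume "p \<in> leaf F x"
      then obtain m where m: "m \<in> maxnodes ?T" "le ?T x m" "p \<in> leaf F m"
        using leaf_eq x by auto
      have "lt ?T x m" using m(1,2) x unfolding le_def by auto
      then obtain s where "s \<in> sons ?T x" "le ?T s m"
        using exists_son_below[OF tree] by blast
      then show "p \<in> (\<Union>s \<in> sons ?T x. leaf F s)"
        using m leaf_eq[OF son_node] by blast
    qed
    show "(\<Union>s \<in> sons ?T x. leaf F s) \<subseteq> leaf F x"
      using nonincreasing_if_leaves_from_maxnodes x son_node son_gt
      unfolding nonincreasing_def le_def by blast
  qed
  show "disjoint_family_on (leaf F) (sons ?T x)"
    unfolding disjoint_family_on_def
  proof (intro ballI impI)
    fix s s' assume s: "s \<in> sons ?T x" "s' \<in> sons ?T x" "s \<noteq> s'"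
    show "leaf F s \<inter> leaf F s' = {}"
    proof (rule ccontr)
      assume "leaf F s \<inter> leaf F s' \<noteq> {}"
      then obtain p where "p \<in> leaf F s" "p \<in> leaf F s'" by blast
      then obtain m m' where m: "m \<in> maxnodes ?T" "le ?T s m" "p \<in> leaf F m"
        and m': "m' \<in> maxnodes ?T" "le ?T s' m'" "p \<in> leaf F m'"
        using leaf_eq[OF son_node[OF s(1)]] leaf_eq[OF son_node[OF s(2)]] by auto
      have "m = m'"
        using disjoint_family_onD[OF disj m(1) m'(1)] m(3) m'(3) by blast
      then show False
        using sons_common_upper_bound[OF tree s(1,2) m(2)] m'(2) s(3) by blast
    qed
  qed
qed

end

section \<open>Minimal cylinders inside an open set\<close>

lemma infinite_prod_decode_fibre:
  assumes "countable A" "infinite A"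
  shows "infinite {n \<in> A. fst (prod_decode (to_nat_on A n)) = j}"
proof -
  define f where "f t = from_nat_into A (prod_encode (j, t))" for t
  have "inj f"
    by (rule injI) (metis f_def assms to_nat_on_from_nat_into_infinite prod_encode_eq prod.inject)
  moreover have "range f \<subseteq> {n \<in> A. fst (prod_decode (to_nat_on A n)) = j}"
    using assms by (auto simp: f_def from_nat_into infinite_imp_nonempty)
  ultimately show ?thesis
    using range_inj_infinite finite_subset by blast
qed

locale baire_graft =
  fixes v :: "nat list" and U :: "(nat \<Rightarrow> nat) set"
  assumes U_subset_cyl: "U \<subseteq> cyl v"
    and cyl_not_subset_U: "\<not> cyl v \<subseteq> U"
    and open_U: "open U"
    and pi_dense: "pi_dense_at U v"
begin

definition Exposed :: "nat list set" where
  "Exposed = {u. prefix v u \<and> \<not> cyl u \<subseteq> U}"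

definition covered :: "nat list \<Rightarrow> nat set" where
  "covered u = {n. cyl (u @ [n]) \<subseteq> U}"

definition Minimal :: "nat list set" where
  "Minimal = {u @ [n] | u n. u \<in> Exposed \<and> n \<in> covered u}"

text \<open>The first component of the pairing makes every colour occur infinitely often among the
  covered sons of \<open>u\<close>; the offset makes the colour exceed the depth of \<open>u\<close> above \<open>v\<close>,
  so that each copy has finite height and chains are bounded.\<close>
definition colour_of :: "nat list \<Rightarrow> nat \<Rightarrow> nat" where
  "colour_of u n = fst (prod_decode (to_nat_on (covered u) n)) + (length u - length v) + 1"

definition colour :: "nat list \<Rightarrow> nat" where
  "colour m = colour_of (butlast m) (last m)"

definition Implants :: "(nat list \<times> nat) set" where
  "Implants = {(u, k). u \<in> Exposed \<and> length u - length v < k}"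

lemma v_Exposed: "v \<in> Exposed"
  using cyl_not_subset_U unfolding Exposed_def by simp

lemma Exposed_prefix_closed: "u \<in> Exposed \<Longrightarrow> prefix v w \<Longrightarrow> prefix w u \<Longrightarrow> w \<in> Exposed"
  unfolding Exposed_def using cyl_antimono by blast

lemma Exposed_ge_length_v: "u \<in> Exposed \<Longrightarrow> length v \<le> length u"
  unfolding Exposed_def using prefix_length_le by blast

lemma covered_infinite: "u \<in> Exposed \<Longrightarrow> infinite (covered u)"
  using pi_dense unfolding pi_dense_at_def Exposed_def covered_def by blast

lemma colour_snoc [simp]: "colour (u @ [n]) = colour_of u n"
  unfolding colour_def by simp

lemma MinimalE:
  assumes "m \<in> Minimal"
  obtains u n where "m = u @ [n]" "u \<in> Exposed" "n \<in> covered u"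
  using assms unfolding Minimal_def by blast

lemma Minimal_snoc: "u \<in> Exposed \<Longrightarrow> n \<in> covered u \<Longrightarrow> u @ [n] \<in> Minimal"
  unfolding Minimal_def by blast

lemma cyl_Minimal_subset_U: "m \<in> Minimal \<Longrightarrow> cyl m \<subseteq> U"
  by (metis MinimalE covered_def mem_Collect_eq)

lemma Minimal_not_Exposed: "m \<in> Minimal \<Longrightarrow> m \<notin> Exposed"
  using cyl_Minimal_subset_U unfolding Exposed_def by blast

lemma v_strict_prefix_Minimal: "m \<in> Minimal \<Longrightarrow> strict_prefix v m"
  by (auto elim!: MinimalE simp: Exposed_def strict_prefix_snoc_iff)

lemma Minimal_ne_v: "m \<in> Minimal \<Longrightarrow> m \<noteq> v"
  using v_strict_prefix_Minimal by blast

lemma Minimal_antichain: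
  assumes "m \<in> Minimal" "m' \<in> Minimal" "prefix m m'"
  shows "m = m'"
proof -
  obtain u n where m': "m' = u @ [n]" "u \<in> Exposed" using assms(2) by (rule MinimalE)
  have "prefix v m" using v_strict_prefix_Minimal[OF assms(1)] by (simp add: strict_prefix_def)
  then have "\<not> prefix m u"
    using Exposed_prefix_closed[OF m'(2)] Minimal_not_Exposed[OF assms(1)] by blast
  with assms(3) m'(1) show ?thesis by simp
qed

lemma Minimal_cyl_unique: "m \<in> Minimal \<Longrightarrow> m' \<in> Minimal \<Longrightarrow> p \<in> cyl m \<Longrightarrow> p \<in> cyl m' \<Longrightarrow> m = m'"
  using cyl_prefix_cases Minimal_antichain by metis

lemma Implants_Exposed: "(u, k) \<in> Implants \<Longrightarrow> u \<in> Exposed"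
  unfolding Implants_def by simp

lemma prefix_v_Implants: "(u, k) \<in> Implants \<Longrightarrow> prefix v u"
  unfolding Implants_def Exposed_def by simp

lemma Implants_prefix_closed:
  "(u', k) \<in> Implants \<Longrightarrow> prefix v u \<Longrightarrow> prefix u u' \<Longrightarrow> (u, k) \<in> Implants"
  unfolding Implants_def using Exposed_prefix_closed prefix_length_le by fastforce

lemma Implants_butlast_Minimal: "m \<in> Minimal \<Longrightarrow> (butlast m, colour m) \<in> Implants"
  by (auto elim!: MinimalE simp: Implants_def colour_of_def)

lemma colour_fibre_infinite:
  assumes "(u, k) \<in> Implants"
  shows "infinite {n \<in> covered u. colour_of u n = k}"
proof -
  have u: "u \<in> Exposed" and k: "length u - length v < k" using assms unfolding Implants_def by auto
  have "{n \<in> covered u. colour_of u n = k} =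
    {n \<in> covered u. fst (prod_decode (to_nat_on (covered u) n)) = k - (length u - length v) - 1}"
    using k unfolding colour_of_def by auto
  then show ?thesis
    using infinite_prod_decode_fibre[OF _ covered_infinite[OF u]] by simp
qed

lemma exists_covered_colour:
  assumes "(u, k) \<in> Implants"
  obtains n where "n \<in> covered u" "colour_of u n = k"
  using colour_fibre_infinite[OF assms] by (metis (mono_tags, lifting) empty_Collect_eq finite.emptyI)

text \<open>The first initial segment of \<open>p\<close> whose cylinder lies in \<open>U\<close> is minimal.\<close>

lemma Minimal_cover:
  assumes "p \<in> U"
  obtains m where "m \<in> Minimal" "p \<in> cyl m"
proof -
  let ?seg = "\<lambda>j. map p [0..<j]"
  let ?P = "\<lambda>j. length v \<le> j \<and> cyl (?seg j) \<subseteq> U"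
  obtain j where "\<And>i. j \<le> i \<Longrightarrow> cyl (?seg i) \<subseteq> U"
    using open_imp_cyl_subset_eventually[OF open_U assms] by blast
  then have "?P (max j (length v))" by simp
  define j0 where "j0 = (LEAST j. ?P j)"
  have P0: "?P j0" using LeastI[of ?P, OF \<open>?P (max j (length v))\<close>] unfolding j0_def .
  have v_seg: "?seg (length v) = v"
    using assms U_subset_cyl mem_cyl_iff by blast
  then have "j0 \<noteq> length v" using P0 cyl_not_subset_U by auto
  then obtain i where i: "j0 = Suc i" "length v \<le> i" using P0 by (cases j0) auto
  have "\<not> cyl (?seg i) \<subseteq> U" using not_less_Least[of i ?P] i unfolding j0_def by auto
  moreover have "prefix v (?seg i)" using prefix_map_upt[OF i(2), of p] v_seg by simp
  ultimately have "?seg i \<in> Exposed" unfolding Exposed_def by simp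
  moreover have "p i \<in> covered (?seg i)" using P0 i(1) unfolding covered_def by simp
  ultimately have "?seg i @ [p i] \<in> Minimal" by (rule Minimal_snoc)
  moreover have "p \<in> cyl (?seg i @ [p i])" unfolding mem_cyl_iff by simp
  ultimately show ?thesis using that by blast
qed

lemma U_eq_Union_Minimal: "U = (\<Union>m \<in> Minimal. cyl m)"
proof
  show "U \<subseteq> (\<Union>m \<in> Minimal. cyl m)" using Minimal_cover by blast
qed (use cyl_Minimal_subset_U in blast)

section \<open>The skeleton of the graft\<close>

text \<open>The copy of colour \<open>k\<close> of the word \<open>u\<close>, placed in the fresh summand of the node type.\<close>
definition implant :: "nat list \<Rightarrow> nat \<Rightarrow> node" where
  "implant u k = Inr (to_nat (u, k))"

definition label :: "node \<Rightarrow> nat list" where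
  "label x = (case x of Inl w \<Rightarrow> w | Inr j \<Rightarrow> fst (from_nat j :: nat list \<times> nat))"

definition node_colour :: "node \<Rightarrow> nat" where
  "node_colour x = (case x of Inl w \<Rightarrow> colour w | Inr j \<Rightarrow> snd (from_nat j :: nat list \<times> nat))"

definition Implant_nodes :: "node set" where
  "Implant_nodes = (\<lambda>(u, k). implant u k) ` Implants"

definition G_nodes :: "node set" where
  "G_nodes = insert (Inl v) (Implant_nodes \<union> Inl ` Minimal)"

definition G_less :: "node \<Rightarrow> node \<Rightarrow> bool" where
  "G_less a b \<longleftrightarrow> b \<in> G_nodes \<and> b \<noteq> Inl v \<and>
     (a = Inl v \<or> a \<in> Implant_nodes \<and> node_colour a = node_colour b \<and> strict_prefix (label a) (label b))"

definition G_leaf :: "node \<Rightarrow> (nat \<Rightarrow> nat) set" where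
  "G_leaf x = (\<Union>m \<in> {m \<in> Minimal. x = Inl m \<or> G_less x (Inl m)}. cyl m)"

definition G_tree :: "node tree" where
  "G_tree = (G_nodes, G_less)"

definition G :: "(node, nat \<Rightarrow> nat) ftree" where
  "G = (G_tree, G_leaf)"

lemma G_simps [simp]: "skel G = G_tree" "leaf G = G_leaf" "nodes G_tree = G_nodes" "lt G_tree = G_less"
  by (simp_all add: G_def G_tree_def skel_def leaf_def nodes_def lt_def)

lemma le_G_tree: "le G_tree x y \<longleftrightarrow> x = y \<or> G_less x y"
  by (simp add: le_def)

lemma implant_inject [simp]: "implant u k = implant u' k' \<longleftrightarrow> u = u' \<and> k = k'"
  by (simp add: implant_def)

lemma implant_ne_Inl [simp]: "implant u k \<noteq> Inl w" "Inl w \<noteq> implant u k"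
  by (simp_all add: implant_def)

lemma label_simps [simp]: "label (implant u k) = u" "label (Inl w) = w"
  by (simp_all add: label_def implant_def)

lemma node_colour_simps [simp]: "node_colour (implant u k) = k" "node_colour (Inl w) = colour w"
  by (simp_all add: node_colour_def implant_def)

lemma implant_mem_Implant_nodes [simp]: "implant u k \<in> Implant_nodes \<longleftrightarrow> (u, k) \<in> Implants"
  unfolding Implant_nodes_def by auto

lemma Inl_notin_Implant_nodes [simp]: "Inl w \<notin> Implant_nodes"
  unfolding Implant_nodes_def by auto

lemma Implant_nodesE:
  assumes "x \<in> Implant_nodes"
  obtains u k where "x = implant u k" "(u, k) \<in> Implants"
  using assms unfolding Implant_nodes_def by auto

lemma G_nodes_cases:
  assumes "x \<in> G_nodes"
  obtains "x = Inl v" | u k where "x = implant u k" "(u, k) \<in> Implants" | m where "x = Inl m" "m \<in> Minimal"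
  using assms unfolding G_nodes_def by (auto elim: Implant_nodesE)

lemma Inl_Minimal_in_G_nodes: "m \<in> Minimal \<Longrightarrow> Inl m \<in> G_nodes"
  and implant_in_G_nodes: "(u, k) \<in> Implants \<Longrightarrow> implant u k \<in> G_nodes"
  and root_in_G_nodes: "Inl v \<in> G_nodes"
  unfolding G_nodes_def by auto

lemma prefix_v_label: "x \<in> G_nodes \<Longrightarrow> prefix v (label x)"
  by (erule G_nodes_cases) (auto simp: Implants_def Exposed_def dest: v_strict_prefix_Minimal)

lemma G_less_nodes: "G_less a b \<Longrightarrow> a \<in> G_nodes \<and> b \<in> G_nodes"
  unfolding G_less_def G_nodes_def by blast

lemma G_less_implant_source:
  "G_less a b \<Longrightarrow> a \<noteq> Inl v \<Longrightarrow>
     a \<in> Implant_nodes \<and> node_colour a = node_colour b \<and> strict_prefix (label a) (label b)"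
  unfolding G_less_def by blast

lemma not_G_less_root [simp]: "\<not> G_less a (Inl v)"
  unfolding G_less_def by blast

lemma not_G_less_Inl_Minimal [simp]: "m \<in> Minimal \<Longrightarrow> \<not> G_less (Inl m) b"
  unfolding G_less_def using Minimal_ne_v by auto

lemma G_less_rootI: "b \<in> G_nodes \<Longrightarrow> b \<noteq> Inl v \<Longrightarrow> G_less (Inl v) b"
  unfolding G_less_def by blast

lemma G_less_implantI:
  "(u, k) \<in> Implants \<Longrightarrow> b \<in> G_nodes \<Longrightarrow> b \<noteq> Inl v \<Longrightarrow> node_colour b = k \<Longrightarrow>
     strict_prefix u (label b) \<Longrightarrow> G_less (implant u k) b"
  unfolding G_less_def by simp

definition rank :: "node \<Rightarrow> nat" where
  "rank x = length (label x) + (if x = Inl v then 0 else 1)"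

lemma G_less_rank: "G_less a b \<Longrightarrow> rank a < rank b"
proof -
  assume ab: "G_less a b"
  then have "b \<in> G_nodes" "b \<noteq> Inl v" unfolding G_less_def by auto
  then have "length v \<le> length (label b)" "rank b = length (label b) + 1"
    using prefix_v_label prefix_length_le unfolding rank_def by auto
  moreover have "a \<noteq> Inl v \<Longrightarrow> length (label a) < length (label b)"
    using G_less_implant_source[OF ab] prefix_length_less by blast
  ultimately show ?thesis unfolding rank_def by auto
qed

lemma G_less_irrefl: "\<not> G_less a a"
  using G_less_rank by blast

lemma G_less_trans:
  assumes ab: "G_less a b" and bc: "G_less b c"
  shows "G_less a c"
proof (cases "a = Inl v")
  case True
  then show ?thesis using bc unfolding G_less_def by blast
next
  case False
  have "b \<noteq> Inl v" using ab by auto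
  with G_less_implant_source[OF ab False] G_less_implant_source[OF bc] show ?thesis
    using bc unfolding G_less_def by (metis prefix_order.less_trans)
qed

lemma Implant_node_eq: "x \<in> Implant_nodes \<Longrightarrow> x = implant (label x) (node_colour x)"
  by (auto elim: Implant_nodesE)

lemma preds_G_tree_subset:
  "preds G_tree x \<subseteq> insert (Inl v) ((\<lambda>u. implant u (node_colour x)) ` {u. prefix u (label x)})"
proof
  fix y assume "y \<in> preds G_tree x"
  then have yx: "G_less y x" unfolding preds_def by simp
  show "y \<in> insert (Inl v) ((\<lambda>u. implant u (node_colour x)) ` {u. prefix u (label x)})"
  proof (cases "y = Inl v")
    case False
    then show ?thesis using G_less_implant_source[OF yx] Implant_node_eq
      by (metis (mono_tags, lifting) image_eqI insertCI mem_Collect_eq prefix_order.less_imp_le)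
  qed simp
qed

lemma finite_preds_G_tree: "finite (preds G_tree x)"
proof -
  have "{u. prefix u (label x)} = set (prefixes (label x))" by auto
  then show ?thesis using finite_subset[OF preds_G_tree_subset] by simp
qed

lemma preds_G_tree_linear:
  assumes "G_less a x" "G_less b x" "a \<noteq> b"
  shows "G_less a b \<or> G_less b a"
proof (cases "a = Inl v \<or> b = Inl v")
  case True
  then show ?thesis using assms G_less_nodes G_less_rootI by metis
next
  case False
  then have a: "a \<in> Implant_nodes" "node_colour a = node_colour x" "strict_prefix (label a) (label x)"
    and b: "b \<in> Implant_nodes" "node_colour b = node_colour x" "strict_prefix (label b) (label x)"
    using G_less_implant_source assms(1,2) by blast+
  then have "label a \<noteq> label b" using assms(3) Implant_node_eq by metis
  moreover have "prefix (label a) (label b) \<or> prefix (label b) (label a)"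
    using a(3) b(3) prefix_same_cases by (metis prefix_order.less_imp_le)
  ultimately have "strict_prefix (label a) (label b) \<or> strict_prefix (label b) (label a)"
    by (auto simp: strict_prefix_def)
  moreover have "a \<in> G_nodes" "b \<in> G_nodes" using assms G_less_nodes by blast+
  ultimately show ?thesis using False a b unfolding G_less_def by auto
qed

lemma is_tree_G_tree: "is_tree G_tree"
  unfolding is_tree_def G_simps
proof (intro conjI allI impI ballI)
  fix x y assume "G_less x y"
  then show "x \<in> G_nodes" "y \<in> G_nodes" using G_less_nodes by auto
next
  fix x show "\<not> G_less x x" by (rule G_less_irrefl)
next
  fix x y z assume "G_less x y" "G_less y z"
  then show "G_less x z" by (rule G_less_trans)
next
  fix x a b assume "a \<in> preds G_tree x" "b \<in> preds G_tree x" "a \<noteq> b"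
  then show "G_less a b \<or> G_less b a" using preds_G_tree_linear unfolding preds_def by auto
next
  fix x B assume B: "B \<subseteq> preds G_tree x" "B \<noteq> {}"
  obtain m where "m \<in> B" "\<And>b. b \<in> B \<Longrightarrow> rank m \<le> rank b"
    using ex_has_least_nat[of "\<lambda>b. b \<in> B"] B(2) by blast
  then show "\<exists>m \<in> B. \<forall>b \<in> B. \<not> G_less b m"
    using G_less_rank by (meson leD)
qed

lemma is_least_G_tree: "is_least G_tree (Inl v)"
  unfolding is_least_def le_G_tree using root_in_G_nodes G_less_rootI by auto

lemma root_G_tree: "root G_tree = Inl v"
  by (rule root_eqI[OF is_tree_G_tree is_least_G_tree])

lemma height_le_omega_G_tree: "height_le_omega G_tree"
  unfolding height_le_omega_def using finite_preds_G_tree by blast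

lemma implant_below:
  assumes y: "y \<in> G_nodes" "y \<noteq> Inl v" and u: "prefix v u" "strict_prefix u (label y)"
  shows "(u, node_colour y) \<in> Implants"
  using y(1)
proof (cases rule: G_nodes_cases)
  case (2 u' k)
  then show ?thesis using Implants_prefix_closed u by (simp add: prefix_order.less_imp_le)
next
  case (3 m)
  then have "prefix u (butlast m)"
    using u(2) by (metis MinimalE butlast_snoc label_simps(2) strict_prefix_snoc_iff)
  then show ?thesis
    using Implants_prefix_closed[OF Implants_butlast_Minimal] u(1) 3 by simp
qed (use y in simp)

lemma maxnodes_G_tree: "maxnodes G_tree = Inl ` Minimal"
proof -
  have not_max: "x \<notin> maxnodes G_tree" if "x = Inl v \<or> x \<in> Implant_nodes" for x
  proof -
    obtain y where "G_less x y"
    proof (cases "x = Inl v")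
      case True
      have "(v, 1) \<in> Implants" using v_Exposed unfolding Implants_def by simp
      then show ?thesis using that True G_less_rootI implant_in_G_nodes by fastforce
    next
      case False
      then obtain u k where x: "x = implant u k" "(u, k) \<in> Implants"
        using \<open>x = Inl v \<or> x \<in> Implant_nodes\<close> by (auto elim: Implant_nodesE)
      obtain n where "n \<in> covered u" "colour_of u n = k" using exists_covered_colour[OF x(2)] .
      then have "G_less x (Inl (u @ [n]))"
        using x Minimal_snoc[OF Implants_Exposed[OF x(2)]] Inl_Minimal_in_G_nodes Minimal_ne_v
        by (auto intro!: G_less_implantI simp: strict_prefix_def)
      then show ?thesis using that by blast
    qed
    then show ?thesis unfolding maxnodes_def using G_less_nodes by auto
  qed
  have max: "Inl m \<in> maxnodes G_tree" if "m \<in> Minimal" for m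
    using that Inl_Minimal_in_G_nodes unfolding maxnodes_def by simp
  show ?thesis
  proof
    show "maxnodes G_tree \<subseteq> Inl ` Minimal"
    proof
      fix x assume x: "x \<in> maxnodes G_tree"
      then have "x \<in> G_nodes" by (simp add: maxnodes_def)
      then show "x \<in> Inl ` Minimal" using not_max x by (cases rule: G_nodes_cases) auto
    qed
  qed (use max in blast)
qed

lemma impl_G_tree: "impl G_tree = Implant_nodes"
  unfolding impl_def root_G_tree maxnodes_G_tree G_simps G_nodes_def by auto

section \<open>Leaves\<close>

lemma G_leaf_Inl_Minimal [simp]: "m \<in> Minimal \<Longrightarrow> G_leaf (Inl m) = cyl m"
  unfolding G_leaf_def by auto

lemma G_leaf_root: "G_leaf (Inl v) = U"
proof -
  have "{m \<in> Minimal. Inl v = Inl m \<or> G_less (Inl v) (Inl m)} = Minimal"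
    using Minimal_ne_v G_less_rootI Inl_Minimal_in_G_nodes by blast
  then show ?thesis unfolding G_leaf_def by (simp add: U_eq_Union_Minimal[symmetric])
qed

lemma G_leaf_eq_Union_maxnodes:
  "G_leaf x = (\<Union>m \<in> {m \<in> maxnodes G_tree. le G_tree x m}. G_leaf m)"
  unfolding maxnodes_G_tree le_G_tree by (auto simp: G_leaf_def)

lemma G_leaf_subset_cyl_label:
  assumes "x \<in> G_nodes"
  shows "G_leaf x \<subseteq> cyl (label x)"
proof -
  have "prefix (label x) m" if "m \<in> Minimal" "x = Inl m \<or> G_less x (Inl m)" for m
  proof (cases "x = Inl v")
    case True
    then show ?thesis using v_strict_prefix_Minimal[OF that(1)] by (simp add: strict_prefix_def)
  next
    case False
    then show ?thesis using that G_less_implant_source[of x "Inl m"] by (auto simp: strict_prefix_def)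
  qed
  then show ?thesis unfolding G_leaf_def using cyl_antimono by blast
qed

lemma G_leaf_subset_U: "G_leaf x \<subseteq> U"
  unfolding G_leaf_def using cyl_Minimal_subset_U by blast

lemma disjoint_family_maxnodes: "disjoint_family_on G_leaf (maxnodes G_tree)"
  unfolding maxnodes_G_tree disjoint_family_on_def using Minimal_cyl_unique by fastforce

lemma open_G_leaf: "open (G_leaf x)"
  unfolding G_leaf_def using open_cyl by blast

lemma nonincreasing_G: "nonincreasing G"
  using nonincreasing_if_leaves_from_maxnodes[of G] is_tree_G_tree G_leaf_eq_Union_maxnodes
  unfolding G_simps by blast

lemma locally_strict_G: "locally_strict G"
  using locally_strict_if_leaves_from_maxnodes[of G] is_tree_G_tree
    G_leaf_eq_Union_maxnodes disjoint_family_maxnodes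
  unfolding G_simps by blast

section \<open>Branching and chains\<close>

lemma sons_implant_label:
  assumes wk: "(w, k) \<in> Implants" and son: "s \<in> sons G_tree (implant w k)"
  obtains n where "label s = w @ [n]" "node_colour s = k"
proof -
  have s: "s \<in> G_nodes" "G_less (implant w k) s" using son unfolding sons_def by auto
  then have sv: "s \<noteq> Inl v" and col: "node_colour s = k" and sp: "strict_prefix w (label s)"
    using G_less_implant_source[OF s(2)] by auto
  obtain n rest where ls: "label s = w @ n # rest" using sp strict_prefixE' by metis
  have "rest = []"
  proof (rule ccontr)
    assume "rest \<noteq> []"
    then have sp': "strict_prefix (w @ [n]) (label s)" using ls by (auto simp: strict_prefix_def)
    have "prefix v (w @ [n])" using prefix_v_Implants[OF wk] by (metis prefix_append)
    then have I: "(w @ [n], k) \<in> Implants" using implant_below[OF s(1) sv _ sp'] col by simp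
    have "G_less (implant w k) (implant (w @ [n]) k)"
      by (rule G_less_implantI[OF wk implant_in_G_nodes[OF I]]) (auto simp: strict_prefix_def)
    moreover have "G_less (implant (w @ [n]) k) s" by (rule G_less_implantI[OF I s(1) sv col sp'])
    ultimately show False using son implant_in_G_nodes[OF I] unfolding sons_def by auto
  qed
  then show ?thesis using that ls col by simp
qed

lemma covered_son:
  assumes wk: "(w, k) \<in> Implants" and n: "n \<in> covered w" "colour_of w n = k"
  shows "Inl (w @ [n]) \<in> sons G_tree (implant w k)"
proof -
  have m: "w @ [n] \<in> Minimal" using Minimal_snoc[OF Implants_Exposed[OF wk] n(1)] .
  have less: "G_less (implant w k) (Inl (w @ [n]))"
    using m n(2) Minimal_ne_v[OF m]
    by (intro G_less_implantI[OF wk Inl_Minimal_in_G_nodes]) (auto simp: strict_prefix_def)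
  have "\<not> (G_less (implant w k) z \<and> G_less z (Inl (w @ [n])))" for z
  proof
    assume z: "G_less (implant w k) z \<and> G_less z (Inl (w @ [n]))"
    then have "strict_prefix w (label z)" "z \<noteq> Inl v"
      using G_less_implant_source[of "implant w k" z] by auto
    moreover have "strict_prefix (label z) (w @ [n])"
      using G_less_implant_source[of z "Inl (w @ [n])"] z \<open>z \<noteq> Inl v\<close> by auto
    ultimately show False by (auto simp: strict_prefix_snoc_iff strict_prefix_def)
  qed
  then show ?thesis using less G_less_nodes unfolding sons_def by auto
qed

lemma root_son: "0 < k \<Longrightarrow> implant v k \<in> sons G_tree (Inl v)"
proof -
  assume "0 < k"
  then have I: "(v, k) \<in> Implants" using v_Exposed unfolding Implants_def by simp
  have "\<not> G_less z (implant v k)" if "G_less (Inl v) z" for z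
  proof
    assume "G_less z (implant v k)"
    moreover have "z \<noteq> Inl v" "z \<in> G_nodes" using that G_less_nodes by auto
    ultimately have "strict_prefix (label z) v" "prefix v (label z)"
      using G_less_implant_source prefix_v_label by fastforce+
    then show False by (simp add: prefix_order.leD)
  qed
  then show ?thesis
    using G_less_rootI implant_in_G_nodes[OF I] unfolding sons_def by auto
qed

lemma G_node_eqI:
  assumes "x \<in> G_nodes" "y \<in> G_nodes" "x \<noteq> Inl v" "y \<noteq> Inl v"
    and "label x = label y" "node_colour x = node_colour y"
  shows "x = y"
proof -
  have Minimal_not_Implant: False if "m \<in> Minimal" "(m, k) \<in> Implants" for m k
    using that Minimal_not_Exposed Implants_Exposed by blast
  from assms(1,2) show ?thesis
    by (cases rule: G_nodes_cases; cases rule: G_nodes_cases[OF assms(2)])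
      (use assms Minimal_not_Implant in auto)
qed

lemma inj_on_label_sons_implant:
  assumes wk: "(w, k) \<in> Implants"
  shows "inj_on label (sons G_tree (implant w k))"
proof (rule inj_onI)
  fix s s' assume s: "s \<in> sons G_tree (implant w k)" and s': "s' \<in> sons G_tree (implant w k)"
    and "label s = label s'"
  moreover have "node_colour s = k" "node_colour s' = k"
    using sons_implant_label[OF wk s] sons_implant_label[OF wk s'] by metis+
  moreover have "s \<in> G_nodes" "s' \<in> G_nodes" "s \<noteq> Inl v" "s' \<noteq> Inl v"
    using s s' unfolding sons_def by auto
  ultimately show "s = s'" by (intro G_node_eqI) auto
qed

lemma aleph0_branching_G_tree: "aleph0_branching G_tree"
  unfolding aleph0_branching_def
proof (intro ballI conjI)
  fix x assume x: "x \<in> nodes G_tree - maxnodes G_tree"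
  show "countable (sons G_tree x)" by simp
  have "x \<in> G_nodes" using x by simp
  then show "infinite (sons G_tree x)"
  proof (cases rule: G_nodes_cases)
    case 1
    have "inj (\<lambda>k. implant v (Suc k))" by (rule injI) simp
    moreover have "range (\<lambda>k. implant v (Suc k)) \<subseteq> sons G_tree x" using root_son 1 by auto
    ultimately show ?thesis using range_inj_infinite finite_subset by blast
  next
    case (2 w k)
    have "inj_on (\<lambda>n. Inl (w @ [n]) :: node) {n \<in> covered w. colour_of w n = k}" by (rule inj_onI) simp
    moreover have "(\<lambda>n. Inl (w @ [n])) ` {n \<in> covered w. colour_of w n = k} \<subseteq> sons G_tree x"
      using covered_son 2 by auto
    ultimately show ?thesis
      using colour_fibre_infinite[OF 2(2)] finite_imageD finite_subset by blast
  next
    case 3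
    then show ?thesis using x maxnodes_G_tree by simp
  qed
qed

lemma rank_le_colour:
  assumes "x \<in> G_nodes" "x \<noteq> Inl v"
  shows "rank x \<le> length v + node_colour x + 1"
  using assms(1)
proof (cases rule: G_nodes_cases)
  case (2 u k)
  then show ?thesis using Exposed_ge_length_v unfolding Implants_def rank_def by auto
next
  case (3 m)
  then have "butlast m \<in> Exposed" "length (butlast m) - length v < colour m"
    using Implants_butlast_Minimal unfolding Implants_def by auto
  moreover have "m \<noteq> []" using 3(2) by (auto elim: MinimalE)
  ultimately show ?thesis using 3(1) Exposed_ge_length_v unfolding rank_def by fastforce
qed (use assms in simp)

lemma bounded_chains_G_tree: "bounded_chains G_tree"
  unfolding bounded_chains_def
proof (intro allI impI)
  fix C assume chain: "is_chain G_tree C" and "C \<noteq> {}"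
  have C: "C \<subseteq> G_nodes" "\<And>a b. a \<in> C \<Longrightarrow> b \<in> C \<Longrightarrow> a \<noteq> b \<Longrightarrow> G_less a b \<or> G_less b a"
    using chain unfolding is_chain_def by auto
  obtain B where B: "\<And>c. c \<in> C \<Longrightarrow> rank c \<le> B"
  proof (cases "C \<subseteq> {Inl v}")
    case True
    show ?thesis
    proof (rule that)
      fix c assume "c \<in> C"
      then show "rank c \<le> length v" using True by (auto simp: rank_def)
    qed
  next
    case False
    then obtain x where x: "x \<in> C" "x \<noteq> Inl v" by blast
    have "rank c \<le> length v + node_colour x + 1" if "c \<in> C" for c
    proof (cases "c = Inl v")
      case False
      then have "node_colour c = node_colour x"
        using C(2)[OF that x(1)] x(2) G_less_implant_source by metis
      then show ?thesis using rank_le_colour C(1) that False by fastforce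
    qed (simp add: rank_def)
    then show ?thesis using that by blast
  qed
  then show "\<exists>u \<in> nodes G_tree. \<forall>c \<in> C. le G_tree c u"
    using chain_has_top_if_rank_bounded[OF chain \<open>C \<noteq> {}\<close>, of rank B] G_less_rank C(1) by auto
qed

section \<open>Shoots and grafting\<close>

lemma gg_shoot_implant:
  assumes wk: "(w, k) \<in> Implants"
  shows "gg (shoot G (implant w k)) (shoot S (Inl w))"
  unfolding gg_def
proof (intro ballI impI)
  fix D assume "D \<in> shoot S (Inl w)"
  then obtain F where F: "finite F" "\<And>n. n \<notin> F \<Longrightarrow> cyl (w @ [n]) \<subseteq> D"
    using shoot_S_cofinite_sons by blast
  let ?sons = "sons G_tree (implant w k)"
  define C' where "C' = {s \<in> ?sons. label s \<notin> (\<lambda>n. w @ [n]) ` F}"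
  have "?sons - C' = label -` ((\<lambda>n. w @ [n]) ` F) \<inter> ?sons" unfolding C'_def by auto
  then have "finite (?sons - C')"
    using finite_vimage_IntI[OF finite_imageI[OF F(1)] inj_on_label_sons_implant[OF wk]] by simp
  define X where "X = (\<Union>s \<in> C'. G_leaf s)"
  have shoot: "X \<in> shoot G (implant w k)"
    using \<open>finite (?sons - C')\<close>
    unfolding shoot_def X_def C'_def by auto
  have sub: "X \<subseteq> D"
  proof
    fix p assume "p \<in> X"
    then obtain s where s: "s \<in> C'" "p \<in> G_leaf s" unfolding X_def by blast
    then have son: "s \<in> ?sons" unfolding C'_def by simp
    then obtain n where n: "label s = w @ [n]" using sons_implant_label[OF wk] by blast
    have "s \<in> G_nodes" using son unfolding sons_def by simp
    then have "p \<in> cyl (w @ [n])" using G_leaf_subset_cyl_label[of s] s(2) n by auto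
    moreover have "n \<notin> F" using s(1) n unfolding C'_def by auto
    ultimately show "p \<in> D" using F(2) by blast
  qed
  have "\<not> {n \<in> covered w. colour_of w n = k} \<subseteq> F"
    using colour_fibre_infinite[OF wk] F(1) finite_subset by blast
  then obtain n where n: "n \<in> covered w" "colour_of w n = k" "n \<notin> F" by blast
  then have "Inl (w @ [n]) \<in> C'" using covered_son[OF wk] unfolding C'_def by auto
  moreover have "G_leaf (Inl (w @ [n])) \<noteq> {}"
    using Minimal_snoc[OF Implants_Exposed[OF wk] n(1)] cyl_nonempty by simp
  ultimately have "X \<noteq> {}" unfolding X_def by blast
  with shoot sub show "\<exists>X \<in> shoot G (implant w k). X \<noteq> {} \<and> X \<subseteq> D" by blast
qed

lemma expl_G_tree:
  "expl (skel S) G_tree = {Inl w | w. strict_prefix v w \<and> (\<forall>m \<in> Minimal. \<not> prefix m w)}"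
  unfolding expl_def upclose_def root_G_tree maxnodes_G_tree le_def
  by (auto simp: strict_prefix_def)

lemma preserves_shoots_G: "preserves_shoots S G"
  unfolding preserves_shoots_def
proof (intro ballI)
  fix p y assume p: "p \<in> flesh G" and y: "y \<in> scope S p \<inter> ({root (skel G)} \<union> expl (skel S) (skel G))"
  have "p \<in> U" using p G_leaf_subset_U unfolding flesh_def by auto
  then obtain mp where mp: "mp \<in> Minimal" "p \<in> cyl mp" by (rule Minimal_cover)
  obtain w where w: "y = Inl w" "p \<in> cyl w" "w = v \<or> (strict_prefix v w \<and> (\<forall>m \<in> Minimal. \<not> prefix m w))"
    using y unfolding scope_def G_simps root_G_tree expl_G_tree by auto
  have "strict_prefix w mp"
    using w(3) cyl_prefix_cases[OF w(2) mp(2)] v_strict_prefix_Minimal[OF mp(1)] mp(1)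
    by (auto simp: strict_prefix_def)
  moreover have "prefix v w" using w(3) by (auto simp: strict_prefix_def)
  ultimately have I: "(w, colour mp) \<in> Implants"
    using implant_below[of "Inl mp" w] mp(1) Inl_Minimal_in_G_nodes Minimal_ne_v by simp
  define x where "x = implant w (colour mp)"
  have "G_less x (Inl mp)"
    unfolding x_def using I Inl_Minimal_in_G_nodes[OF mp(1)] Minimal_ne_v[OF mp(1)] \<open>strict_prefix w mp\<close>
    by (intro G_less_implantI) auto
  then have "p \<in> G_leaf x" unfolding G_leaf_def using mp by blast
  then have "x \<in> scope G p" using implant_in_G_nodes[OF I] unfolding scope_def x_def by simp
  moreover have "x \<in> {root (skel G)} \<union> impl (skel G)" using I unfolding x_def G_simps impl_G_tree by simp
  moreover have "gg (shoot G x) (shoot S y)" unfolding x_def w(1) by (rule gg_shoot_implant[OF I])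
  ultimately show "\<exists>x \<in> scope G p \<inter> ({root (skel G)} \<union> impl (skel G)). gg (shoot G x) (shoot S y)"
    by blast
qed

lemma is_graft_G_tree: "is_graft (skel S) G_tree"
  unfolding is_graft_def root_G_tree maxnodes_G_tree impl_G_tree
proof (intro conjI)
  have "(v, 1) \<in> Implants" using v_Exposed unfolding Implants_def by simp
  then have "implant v 1 \<in> nodes G_tree" by (simp add: implant_in_G_nodes)
  then show "\<exists>a \<in> nodes G_tree. \<exists>b \<in> nodes G_tree. a \<noteq> b"
    using root_in_G_nodes implant_ne_Inl(2) by (metis G_simps(3))
  show "antichain (skel S) (Inl ` Minimal)"
    unfolding antichain_def using Minimal_antichain by (auto simp: strict_prefix_def)
  show "Inl ` Minimal \<subseteq> {x \<in> nodes (skel S). lt (skel S) (Inl v) x}"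
    using v_strict_prefix_Minimal by auto
  show "Implant_nodes \<inter> nodes (skel S) = {}" by (auto elim: Implant_nodesE simp: implant_def)
qed (use is_tree_G_tree is_least_G_tree in auto)

lemma foliage_graft_G: "foliage_graft S G"
  unfolding foliage_graft_def
  using is_tree_G_tree nonincreasing_G is_graft_G_tree U_subset_cyl
  by (auto simp: is_ftree_def root_G_tree maxnodes_G_tree G_leaf_root)

end

theorem mainTheorem14:
  fixes v :: "nat list" and U :: "(nat \<Rightarrow> nat) set"
  assumes "U \<subset> leaf S (Inl v)"
    and "open U"
    and "pi_dense_at U v"
  shows "\<exists>G :: (node, nat \<Rightarrow> nat) ftree.
           is_ftree G \<and>
           root (skel G) = Inl v \<and>
           height_le_omega (skel G) \<and>
           aleph0_branching (skel G) \<and>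
           bounded_chains (skel G) \<and>
           locally_strict G \<and>
           open_ftree G \<and>
           foliage_graft S G \<and>
           preserves_shoots S G \<and>
           impl (skel G) \<noteq> {} \<and>
           cut S G = leaf S (Inl v) - U \<and>
           U = (\<Union>z \<in> maxnodes (skel G). leaf S z) \<and>
           disjoint_family_on (leaf S) (maxnodes (skel G))"
proof -
  interpret baire_graft v U
    using assms by unfold_locales auto
  have "(v, 1) \<in> Implants" using v_Exposed unfolding Implants_def by simp
  then have "implant v 1 \<in> impl (skel G)" by (simp add: impl_G_tree)
  then have "impl (skel G) \<noteq> {}" by blast
  moreover have "disjoint_family_on (leaf S) (maxnodes (skel G))"
    using disjoint_family_maxnodes by (simp add: maxnodes_G_tree disjoint_family_on_def)
  ultimately show ?thesis
    using is_tree_G_tree root_G_tree height_le_omega_G_tree aleph0_branching_G_tree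
      bounded_chains_G_tree locally_strict_G open_G_leaf foliage_graft_G preserves_shoots_G
      U_eq_Union_Minimal G_leaf_root
    by (intro exI[of _ G]) (auto simp: is_ftree_def open_ftree_def cut_def maxnodes_G_tree)
qed

end
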